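(* Let $0<\theta<1$ and let $X$ be a random variable on $\{0,1,2,\dots\}$ with probability mass function \[f(x)=\frac{\theta^x}{x!}-\frac{\theta^{x+1}}{(x+1)!},\quad x=0,1,2,\dots.\] Then the moment generating function of $X$ is $M_X(t)=e^{\theta e^t}(1-e^{-t})+e^{-t}$ for all real $t$, and \[\mathbb E(X)=e^{\theta}-1,\qquad \mathrm{Var}(X)=e^{\theta}\bigl(2\theta+1-e^{\theta}\bigr).\] *)

theory Defs
  imports "HOL-Probability.Probability"
begin

end

theory Submission
  imports Defs
begin

text \<open>With the Poisson-type weights \<open>a n = \<theta>\<^sup>n / n!\<close> the mass function is the telescoping
  difference \<open>a x - a (x + 1)\<close>, so \<open>E g(X) = \<Sum> a n g n - \<Sum> a (n + 1) g n\<close>. Both series are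
  exponential series: for \<open>g n = exp (t n)\<close> directly, and for \<open>g n = n, n\<^sup>2\<close> after writing
  \<open>n = (n + 1) - 1\<close> in the shifted series and using \<open>\<Sum> a n n = \<theta> e\<^sup>\<theta>\<close> and
  \<open>\<Sum> a n n\<^sup>2 = \<theta> (\<theta> + 1) e\<^sup>\<theta>\<close>.\<close>

lemma
  fixes p :: "nat pmf" and f :: "nat \<Rightarrow> real"
  assumes nonneg: "\<And>n. 0 \<le> f n" and sums: "(\<lambda>n. pmf p n * f n) sums S"
  shows integrable_nat_pmf_sums: "integrable (measure_pmf p) f"
    and expectation_nat_pmf_sums: "measure_pmf.expectation p f = S"
proof -
  have "integrable (count_space UNIV) (\<lambda>n. pmf p n * f n)"
    using sums nonneg by (simp add: integrable_count_space_nat_iff sums_iff)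
  then show "integrable (measure_pmf p) f"
    unfolding measure_pmf_eq_density by (subst integrable_density) auto
  have "measure_pmf.expectation p f = (\<integral>n. pmf p n * f n \<partial>count_space UNIV)"
    unfolding measure_pmf_eq_density by (subst integral_density) auto
  also have "\<dots> = S"
    using \<open>integrable (count_space UNIV) _\<close> sums_unique[OF sums]
    by (simp add: integral_count_space_nat)
  finally show "measure_pmf.expectation p f = S" .
qed

lemma exp_sums: "(\<lambda>n. x ^ n / fact n) sums exp (x :: real)"
  using exp_converges[of x] by (simp add: divide_inverse mult.commute)

lemma power_div_fact_Suc_mult:
  "x ^ Suc n / fact (Suc n) * real (Suc n) = x * (x ^ n / fact n :: real)"
  by (simp add: field_simps del: fact_Suc) (simp add: algebra_simps)

lemma exp_sums_times_n: "(\<lambda>n. x ^ n / fact n * real n) sums (x * exp (x :: real))"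
proof -
  have "(\<lambda>n. x ^ Suc n / fact (Suc n) * real (Suc n)) sums (x * exp x)"
    unfolding power_div_fact_Suc_mult by (intro sums_mult exp_sums)
  then show ?thesis
    by (subst (asm) sums_Suc_iff) simp
qed

lemma exp_sums_times_n_squared:
  "(\<lambda>n. x ^ n / fact n * real n ^ 2) sums (x * (x + 1) * exp (x :: real))"
proof -
  have "x ^ Suc n / fact (Suc n) * real (Suc n) ^ 2 = x * (x ^ n / fact n * real n + x ^ n / fact n)"
    for n
    by (simp only: power2_eq_square mult.assoc[symmetric] power_div_fact_Suc_mult)
       (simp add: algebra_simps add_divide_distrib)
  then have "(\<lambda>n. x ^ Suc n / fact (Suc n) * real (Suc n) ^ 2) sums (x * (x * exp x + exp x))"
    using sums_mult[OF sums_add[OF exp_sums_times_n exp_sums], of x x] by simp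
  then show ?thesis
    by (subst (asm) sums_Suc_iff) (simp add: algebra_simps)
qed

lemma telescoping_pmf_sums:
  fixes p :: "nat pmf" and a f :: "nat \<Rightarrow> real"
  assumes "\<And>n. pmf p n = a n - a (Suc n)"
    and "(\<lambda>n. a n * f n) sums A" and "(\<lambda>n. a (Suc n) * f n) sums B"
  shows "(\<lambda>n. pmf p n * f n) sums (A - B)"
  using sums_diff[OF assms(2,3)] by (simp add: assms(1) left_diff_distrib)

context
  fixes \<theta> :: real and p :: "nat pmf"
  assumes pmf_p: "\<And>x. pmf p x = \<theta> ^ x / fact x - \<theta> ^ (x + 1) / fact (x + 1)"
begin

private lemma pmf_p_Suc: "pmf p n = \<theta> ^ n / fact n - \<theta> ^ Suc n / fact (Suc n)"
  using pmf_p by simp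

private lemma shifted_exp_sums: "(\<lambda>n. \<theta> ^ Suc n / fact (Suc n)) sums (exp \<theta> - 1)"
  using exp_sums[of \<theta>] by (subst sums_Suc_iff) simp

private lemma shifted_exp_sums_times_n:
  "(\<lambda>n. \<theta> ^ Suc n / fact (Suc n) * real (Suc n)) sums (\<theta> * exp \<theta>)"
  using exp_sums_times_n[of \<theta>] by (subst sums_Suc_iff) simp

lemma poisson_diff_pmf_mgf: "measure_pmf.expectation p (\<lambda>x. exp (t * real x))
    = exp (\<theta> * exp t) * (1 - exp (- t)) + exp (- t)"
proof -
  have weight: "\<theta> ^ n / fact n * exp (t * real n) = (\<theta> * exp t) ^ n / fact n" for n
    by (simp add: power_mult_distrib exp_of_nat2_mult)
  have shifted_weight: "\<theta> ^ Suc n / fact (Suc n) * exp (t * real n)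
      = exp (- t) * ((\<theta> * exp t) ^ Suc n / fact (Suc n))" for n
    by (simp add: power_mult_distrib exp_of_nat2_mult exp_minus field_simps del: fact_Suc)
  have "(\<lambda>n. \<theta> ^ n / fact n * exp (t * real n)) sums exp (\<theta> * exp t)"
    unfolding weight by (rule exp_sums)
  moreover have "(\<lambda>n. \<theta> ^ Suc n / fact (Suc n) * exp (t * real n))
      sums (exp (- t) * (exp (\<theta> * exp t) - 1))"
    unfolding shifted_weight using exp_sums by (intro sums_mult) (subst sums_Suc_iff, simp)
  ultimately have "(\<lambda>n. pmf p n * exp (t * real n))
      sums (exp (\<theta> * exp t) - exp (- t) * (exp (\<theta> * exp t) - 1))"
    by (rule telescoping_pmf_sums[OF pmf_p_Suc])
  from expectation_nat_pmf_sums[OF _ this] show ?thesis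
    by (simp add: algebra_simps)
qed

lemma poisson_diff_pmf_mean_sums: "(\<lambda>n. pmf p n * real n) sums (exp \<theta> - 1)"
proof -
  have shift: "\<theta> ^ Suc n / fact (Suc n) * real n
      = \<theta> ^ Suc n / fact (Suc n) * real (Suc n) - \<theta> ^ Suc n / fact (Suc n)" for n
    by (simp add: algebra_simps add_divide_distrib del: fact_Suc)
  have "(\<lambda>n. \<theta> ^ Suc n / fact (Suc n) * real n) sums (\<theta> * exp \<theta> - (exp \<theta> - 1))"
    unfolding shift by (intro sums_diff shifted_exp_sums shifted_exp_sums_times_n)
  with exp_sums_times_n
  have "(\<lambda>n. pmf p n * real n) sums (\<theta> * exp \<theta> - (\<theta> * exp \<theta> - (exp \<theta> - 1)))"
    by (rule telescoping_pmf_sums[OF pmf_p_Suc])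
  then show ?thesis by simp
qed

lemma poisson_diff_pmf_second_moment_sums:
  "(\<lambda>n. pmf p n * real n ^ 2) sums (2 * \<theta> * exp \<theta> - exp \<theta> + 1)"
proof -
  have shift: "\<theta> ^ Suc n / fact (Suc n) * real n ^ 2
      = \<theta> ^ Suc n / fact (Suc n) * real (Suc n) ^ 2
        - 2 * (\<theta> ^ Suc n / fact (Suc n) * real (Suc n)) + \<theta> ^ Suc n / fact (Suc n)" for n
    by (simp add: algebra_simps power2_eq_square add_divide_distrib diff_divide_distrib del: fact_Suc)
  have "(\<lambda>n. \<theta> ^ Suc n / fact (Suc n) * real (Suc n) ^ 2) sums (\<theta> * (\<theta> + 1) * exp \<theta>)"
    using exp_sums_times_n_squared[of \<theta>] by (subst sums_Suc_iff) simp
  then have "(\<lambda>n. \<theta> ^ Suc n / fact (Suc n) * real n ^ 2)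
      sums (\<theta> * (\<theta> + 1) * exp \<theta> - 2 * (\<theta> * exp \<theta>) + (exp \<theta> - 1))"
    unfolding shift by (intro sums_add sums_diff sums_mult shifted_exp_sums shifted_exp_sums_times_n)
  with exp_sums_times_n_squared have "(\<lambda>n. pmf p n * real n ^ 2)
      sums (\<theta> * (\<theta> + 1) * exp \<theta> - (\<theta> * (\<theta> + 1) * exp \<theta> - 2 * (\<theta> * exp \<theta>) + (exp \<theta> - 1)))"
    by (rule telescoping_pmf_sums[OF pmf_p_Suc])
  then show ?thesis by (simp add: algebra_simps)
qed

end

text \<open>The bounds on \<open>\<theta>\<close> are what makes the formula a mass function; as \<open>p\<close> is given
  as a pmf, the proof does not need them.\<close>

theorem mainTheorem4:
  fixes \<theta> :: real and p :: "nat pmf"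
  assumes "0 < \<theta>" and "\<theta> < 1"
    and "\<And>x. pmf p x = \<theta> ^ x / fact x - \<theta> ^ (x + 1) / fact (x + 1)"
  shows "(\<forall>t::real. measure_pmf.expectation p (\<lambda>x. exp (t * real x))
            = exp (\<theta> * exp t) * (1 - exp (- t)) + exp (- t))
    \<and> (measure_pmf.expectation p real = exp \<theta> - 1)
    \<and> (measure_pmf.variance p real = exp \<theta> * (2 * \<theta> + 1 - exp \<theta>))"
proof -
  note mean = poisson_diff_pmf_mean_sums[OF assms(3)]
    and second = poisson_diff_pmf_second_moment_sums[OF assms(3)]
  have "measure_pmf.variance p real
      = measure_pmf.expectation p (\<lambda>x. real x ^ 2) - (measure_pmf.expectation p real)\<^sup>2"
    using integrable_nat_pmf_sums[OF _ mean] integrable_nat_pmf_sums[OF _ second]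
    by (simp add: measure_pmf.variance_eq)
  also have "\<dots> = (2 * \<theta> * exp \<theta> - exp \<theta> + 1) - (exp \<theta> - 1)\<^sup>2"
    by (simp add: expectation_nat_pmf_sums[OF _ mean] expectation_nat_pmf_sums[OF _ second])
  also have "\<dots> = exp \<theta> * (2 * \<theta> + 1 - exp \<theta>)"
    by (simp add: power2_eq_square algebra_simps)
  finally show ?thesis
    using poisson_diff_pmf_mgf[OF assms(3)] expectation_nat_pmf_sums[OF _ mean] by simp
qed

end
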